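(* For an integer $l\ge1$ and a variable $x$, put $X=x+\frac1x$ and $X^{(l)}=x^l+\frac1{x^l}$. Then $$X^{(l)}=\sum_{j=0}^{\lfloor l/2\rfloor}(-1)^j\dim\mathcal{H}^j(\mathbb{R}^{l+2-2j})\,X^{l-2j}.$$
   Context: $\mathcal{H}^j(\mathbb{R}^d)$ is the space of harmonic homogeneous polynomials of degree $j$ in $d$ real variables (so $\dim\mathcal{H}^0(\mathbb{R}^1)=\dim\mathcal{H}^1(\mathbb{R}^1)=1$ and $\dim\mathcal{H}^j(\mathbb{R}^1)=0$ for $j\ge2$). *)

theory Defs
  imports Complex_Main "HOL-Library.Function_Algebras"
begin

text \<open>Polynomials in d real variables x_0,...,x_{d-1} are represented by their
coefficient functions on exponent vectors (multi-indices) alpha :: nat => nat,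
where alpha i = 0 for i >= d.\<close>

definition multi_idx :: "nat \<Rightarrow> nat \<Rightarrow> (nat \<Rightarrow> nat) set" where
  "multi_idx d j = {\<alpha>. (\<forall>i\<ge>d. \<alpha> i = 0) \<and> (\<Sum>i<d. \<alpha> i) = j}"

definition hom_poly :: "nat \<Rightarrow> nat \<Rightarrow> ((nat \<Rightarrow> nat) \<Rightarrow> real) set" where
  "hom_poly d j = {p. \<forall>\<alpha>. \<alpha> \<notin> multi_idx d j \<longrightarrow> p \<alpha> = 0}"

text \<open>Laplacian: coefficient of x^beta in sum_i d^2 p / d x_i^2.\<close>
definition laplacian :: "nat \<Rightarrow> ((nat \<Rightarrow> nat) \<Rightarrow> real) \<Rightarrow> ((nat \<Rightarrow> nat) \<Rightarrow> real)" where
  "laplacian d p = (\<lambda>\<beta>. \<Sum>i<d. real ((\<beta> i + 2) * (\<beta> i + 1)) * p (\<beta>(i := \<beta> i + 2)))"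

definition harm_hom :: "nat \<Rightarrow> nat \<Rightarrow> ((nat \<Rightarrow> nat) \<Rightarrow> real) set" where
  "harm_hom j d = {p \<in> hom_poly d j. laplacian d p = (\<lambda>_. 0)}"

definition coeff_scale :: "real \<Rightarrow> ((nat \<Rightarrow> nat) \<Rightarrow> real) \<Rightarrow> ((nat \<Rightarrow> nat) \<Rightarrow> real)" where
  "coeff_scale c p = (\<lambda>\<alpha>. c * p \<alpha>)"

definition dimH :: "nat \<Rightarrow> nat \<Rightarrow> nat" where
  "dimH j d = vector_space.dim coeff_scale (harm_hom j d)"

end

theory Submission
  imports Defs
begin

text \<open>
  A harmonic homogeneous polynomial of degree \<open>j\<close> in \<open>d\<close> variables is determined by its
  coefficients at the multi-indices \<open>\<alpha>\<close> with \<open>\<alpha> 0 \<le> 1\<close>, and these can be prescribed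
  freely: the vanishing of the Laplacian expresses the coefficient at \<open>\<alpha>\<close> with \<open>\<alpha> 0 \<ge> 2\<close>
  through coefficients with smaller \<open>\<alpha> 0\<close>. Counting those multi-indices gives
  \<open>dim H\<^sup>j(\<real>\<^sup>d) = C(j+d-2, j) + C(j+d-3, j-1)\<close>, which for \<open>d = l+2-2j\<close> becomes
  \<open>C(l-j, j) + C(l-j-1, j-1)\<close>, the coefficients of the Lucas polynomials. By Pascal's rule
  the right-hand side then satisfies \<open>P(l+2) = X P(l+1) - P(l)\<close>, the recurrence of
  \<open>x\<^sup>l + x\<^sup>-\<^sup>l\<close>, and both sides agree for \<open>l = 1, 2\<close>.
\<close>

lemma sum_fun_upd:
  fixes f :: "'a \<Rightarrow> 'b::comm_monoid_add"
  assumes "finite A" "i \<in> A"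
  shows "sum (f(i := v)) A + f i = sum f A + v"
proof -
  have "sum (f(i := v)) A = v + sum f (A - {i})"
    using assms by (simp add: sum.remove sum.cong[of "A - {i}" _ "f(i := v)" f])
  moreover have "sum f A = f i + sum f (A - {i})"
    using assms by (simp add: sum.remove)
  ultimately show ?thesis by (simp add: ac_simps)
qed

lemma finite_multi_idx: "finite (multi_idx d j)"
proof -
  have "inj_on (\<lambda>\<alpha>. map \<alpha> [0..<d]) (multi_idx d j)"
    by (rule inj_onI) (auto simp: multi_idx_def fun_eq_iff not_less)
  moreover have "(\<lambda>\<alpha>. map \<alpha> [0..<d]) ` multi_idx d j \<subseteq> {xs. set xs \<subseteq> {..j} \<and> length xs = d}"
    by (auto simp: multi_idx_def intro!: member_le_sum)
  ultimately show ?thesis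
    by (metis finite_imageD finite_subset finite_lists_length_eq finite_atMost)
qed

lemma upd_add_in_multi_idx_iff:
  assumes "i < d"
  shows "\<beta>(i := \<beta> i + k) \<in> multi_idx d j \<longleftrightarrow>
    (\<forall>i'\<ge>d. \<beta> i' = 0) \<and> (\<Sum>i'<d. \<beta> i') + k = j"
  using assms sum_fun_upd[of "{..<d}" i \<beta> "\<beta> i + k"] by (auto simp: multi_idx_def)

lemma laplacian_split_first:
  assumes "0 < d"
  shows "laplacian d p \<beta> = real ((\<beta> 0 + 2) * (\<beta> 0 + 1)) * p (\<beta>(0 := \<beta> 0 + 2))
    + (\<Sum>i\<in>{1..<d}. real ((\<beta> i + 2) * (\<beta> i + 1)) * p (\<beta>(i := \<beta> i + 2)))"
  using assms unfolding laplacian_def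
  by (simp add: atLeast0LessThan[symmetric] sum.atLeast_Suc_lessThan)

text \<open>
  The harmonic extension of data \<open>g\<close> given on the multi-indices with \<open>\<alpha> 0 \<le> 1\<close>: the
  recursive case makes the coefficient of the Laplacian at \<open>\<alpha>(0 := \<alpha> 0 - 2)\<close> vanish.
\<close>

function harmonic_ext :: "((nat \<Rightarrow> nat) \<Rightarrow> real) \<Rightarrow> nat \<Rightarrow> nat \<Rightarrow> (nat \<Rightarrow> nat) \<Rightarrow> real" where
  "harmonic_ext g d j \<alpha> =
    (if \<alpha> \<notin> multi_idx d j then 0
     else if \<alpha> 0 \<le> 1 then g \<alpha>
     else - (\<Sum>i\<in>{1..<d}. real ((\<alpha> i + 2) * (\<alpha> i + 1)) *
               harmonic_ext g d j ((\<alpha>(0 := \<alpha> 0 - 2))(i := \<alpha> i + 2)))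
          / real (\<alpha> 0 * (\<alpha> 0 - 1)))"
  by auto
termination by (relation "measure (\<lambda>(g, d, j, \<alpha>). \<alpha> 0)") auto

declare harmonic_ext.simps [simp del]

lemma harmonic_ext_hom: "harmonic_ext g d j \<in> hom_poly d j"
  unfolding hom_poly_def by (auto simp: harmonic_ext.simps)

lemma harmonic_ext_base: "\<alpha> \<in> multi_idx d j \<Longrightarrow> \<alpha> 0 \<le> 1 \<Longrightarrow> harmonic_ext g d j \<alpha> = g \<alpha>"
  by (simp add: harmonic_ext.simps)

lemma harmonic_ext_laplacian: "laplacian d (harmonic_ext g d j) = (\<lambda>_. 0)"
proof
  fix \<beta> :: "nat \<Rightarrow> nat"
  let ?c = "\<lambda>i. real ((\<beta> i + 2) * (\<beta> i + 1))"
  let ?p = "harmonic_ext g d j"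
  define \<alpha> where "\<alpha> = \<beta>(0 := \<beta> 0 + 2)"
  show "laplacian d ?p \<beta> = 0"
  proof (cases "0 < d \<and> \<alpha> \<in> multi_idx d j")
    case False
    have "\<beta>(i := \<beta> i + 2) \<notin> multi_idx d j" if "i < d" for i
    proof -
      from that have "0 < d" by simp
      with False show ?thesis
        using upd_add_in_multi_idx_iff[OF that, of \<beta> 2 j] upd_add_in_multi_idx_iff[OF \<open>0 < d\<close>, of \<beta> 2 j]
        unfolding \<alpha>_def by blast
    qed
    then show ?thesis by (simp add: laplacian_def harmonic_ext.simps)
  next
    case True
    have "\<alpha> 0 = \<beta> 0 + 2" by (simp add: \<alpha>_def)
    with True have "?p \<alpha> = - (\<Sum>i\<in>{1..<d}. real ((\<alpha> i + 2) * (\<alpha> i + 1)) *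
        ?p ((\<alpha>(0 := \<alpha> 0 - 2))(i := \<alpha> i + 2))) / real (\<alpha> 0 * (\<alpha> 0 - 1))"
      by (subst harmonic_ext.simps) simp
    also have "\<dots> = - (\<Sum>i\<in>{1..<d}. ?c i * ?p (\<beta>(i := \<beta> i + 2))) / ?c 0"
    proof -
      have "(\<Sum>i\<in>{1..<d}. real ((\<alpha> i + 2) * (\<alpha> i + 1)) * ?p ((\<alpha>(0 := \<alpha> 0 - 2))(i := \<alpha> i + 2)))
          = (\<Sum>i\<in>{1..<d}. ?c i * ?p (\<beta>(i := \<beta> i + 2)))"
        by (rule sum.cong) (auto simp: \<alpha>_def)
      moreover have "real (\<alpha> 0 * (\<alpha> 0 - 1)) = ?c 0" by (simp add: \<alpha>_def)
      ultimately show ?thesis by (simp only:)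
    qed
    finally have "?c 0 * ?p \<alpha> + (\<Sum>i\<in>{1..<d}. ?c i * ?p (\<beta>(i := \<beta> i + 2))) = 0"
      by (simp del: of_nat_mult)
    then show ?thesis using True by (simp add: laplacian_split_first \<alpha>_def)
  qed
qed

lemma harm_hom_eq_0_if_base_0:
  assumes "p \<in> harm_hom j d" and base: "\<And>\<alpha>. \<alpha> \<in> multi_idx d j \<Longrightarrow> \<alpha> 0 \<le> 1 \<Longrightarrow> p \<alpha> = 0"
  shows "p \<alpha> = 0"
proof (induction "\<alpha> 0" arbitrary: \<alpha> rule: less_induct)
  case less
  have hom: "p \<in> hom_poly d j" and harm: "laplacian d p = (\<lambda>_. 0)"
    using assms(1) by (auto simp: harm_hom_def)
  show ?case
  proof (cases "\<alpha> \<in> multi_idx d j \<and> 1 < \<alpha> 0")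
    case False
    then show ?thesis using hom base by (auto simp: hom_poly_def not_less)
  next
    case True
    then have "0 < d" by (auto simp: multi_idx_def)
    define \<beta> where "\<beta> = \<alpha>(0 := \<alpha> 0 - 2)"
    have \<alpha>: "\<beta>(0 := \<beta> 0 + 2) = \<alpha>"
      using True by (auto simp: \<beta>_def fun_eq_iff)
    have "p (\<beta>(i := \<beta> i + 2)) = 0" if "i \<in> {1..<d}" for i
      using that True by (intro less) (auto simp: \<beta>_def)
    then have "real ((\<beta> 0 + 2) * (\<beta> 0 + 1)) * p \<alpha> = laplacian d p \<beta>"
      using \<open>0 < d\<close> by (simp add: laplacian_split_first \<alpha>[simplified])
    then show ?thesis by (simp add: harm del: of_nat_mult)
  qed
qed

interpretation poly_space: vector_space coeff_scale
  by unfold_locales (auto simp: coeff_scale_def fun_eq_iff algebra_simps)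

lemma sum_coeff_scale_apply: "(\<Sum>y\<in>A. coeff_scale (c y) (f y)) \<alpha> = (\<Sum>y\<in>A. c y * f y \<alpha>)"
  by (induction A rule: infinite_finite_induct) (auto simp: coeff_scale_def)

lemma laplacian_add: "laplacian d (p + q) = laplacian d p + laplacian d q"
  unfolding laplacian_def by (simp add: fun_eq_iff algebra_simps sum.distrib)

lemma laplacian_coeff_scale: "laplacian d (coeff_scale c p) = coeff_scale c (laplacian d p)"
  unfolding laplacian_def coeff_scale_def by (simp add: fun_eq_iff algebra_simps sum_distrib_left)

lemma harm_hom_subspace: "poly_space.subspace (harm_hom j d)"
  unfolding poly_space.subspace_def harm_hom_def hom_poly_def
  by (simp add: laplacian_add laplacian_coeff_scale) (simp add: laplacian_def coeff_scale_def fun_eq_iff)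

definition base_idx :: "nat \<Rightarrow> nat \<Rightarrow> (nat \<Rightarrow> nat) set" where
  "base_idx d j = {\<alpha> \<in> multi_idx d j. \<alpha> 0 \<le> 1}"

definition harmonic_basis :: "nat \<Rightarrow> nat \<Rightarrow> (nat \<Rightarrow> nat) \<Rightarrow> (nat \<Rightarrow> nat) \<Rightarrow> real" where
  "harmonic_basis d j \<gamma> = harmonic_ext (\<lambda>\<alpha>. if \<alpha> = \<gamma> then 1 else 0) d j"

lemma harmonic_basis_in_harm_hom: "harmonic_basis d j \<gamma> \<in> harm_hom j d"
  unfolding harmonic_basis_def harm_hom_def using harmonic_ext_hom harmonic_ext_laplacian by blast

lemma harmonic_basis_base:
  "\<beta> \<in> base_idx d j \<Longrightarrow> harmonic_basis d j \<gamma> \<beta> = (if \<beta> = \<gamma> then 1 else 0)"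
  by (simp add: base_idx_def harmonic_basis_def harmonic_ext_base)

lemma sum_harmonic_basis_base:
  assumes "\<beta> \<in> base_idx d j"
  shows "(\<Sum>\<gamma>\<in>base_idx d j. coeff_scale (c \<gamma>) (harmonic_basis d j \<gamma>)) \<beta> = c \<beta>"
proof -
  have "finite (base_idx d j)" by (simp add: base_idx_def finite_multi_idx)
  with assms show ?thesis
    by (simp add: sum_coeff_scale_apply harmonic_basis_base if_distrib cong: if_cong)
qed

lemma harm_hom_eq_sum_harmonic_basis:
  assumes p: "p \<in> harm_hom j d"
  shows "p = (\<Sum>\<gamma>\<in>base_idx d j. coeff_scale (p \<gamma>) (harmonic_basis d j \<gamma>))" (is "p = ?q")
proof -
  have "?q \<in> harm_hom j d"
    using harm_hom_subspace harmonic_basis_in_harm_hom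
    by (intro poly_space.subspace_sum poly_space.subspace_scale) auto
  with p have "p - ?q \<in> harm_hom j d" by (intro poly_space.subspace_diff harm_hom_subspace)
  moreover have "(p - ?q) \<alpha> = 0" if "\<alpha> \<in> multi_idx d j" "\<alpha> 0 \<le> 1" for \<alpha>
  proof -
    from that have "\<alpha> \<in> base_idx d j" by (simp add: base_idx_def)
    then show ?thesis by (simp add: sum_harmonic_basis_base)
  qed
  ultimately have "(p - ?q) \<alpha> = 0" for \<alpha> by (rule harm_hom_eq_0_if_base_0)
  then have "p - ?q = 0" unfolding zero_fun_def by (rule ext)
  then show ?thesis by (rule right_minus_eq[THEN iffD1])
qed

lemma dimH_eq_card_base_idx: "dimH j d = card (base_idx d j)"
proof -
  let ?B = "harmonic_basis d j ` base_idx d j"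
  have fin: "finite (base_idx d j)" by (simp add: base_idx_def finite_multi_idx)
  have inj: "inj_on (harmonic_basis d j) (base_idx d j)"
  proof (rule inj_onI)
    fix \<beta> \<gamma> assume "\<beta> \<in> base_idx d j" and "harmonic_basis d j \<beta> = harmonic_basis d j \<gamma>"
    then show "\<beta> = \<gamma>" by (metis harmonic_basis_base zero_neq_one)
  qed
  have "poly_space.independent ?B"
  proof (rule poly_space.independent_if_scalars_zero)
    fix c b assume sum0: "(\<Sum>x\<in>?B. coeff_scale (c x) x) = 0" and "b \<in> ?B"
    then obtain \<beta> where \<beta>: "\<beta> \<in> base_idx d j" and b: "b = harmonic_basis d j \<beta>" by blast
    have "(\<Sum>\<gamma>\<in>base_idx d j. coeff_scale ((c \<circ> harmonic_basis d j) \<gamma>) (harmonic_basis d j \<gamma>)) \<beta> = 0"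
      using sum0 inj by (simp add: sum.reindex)
    then have "(c \<circ> harmonic_basis d j) \<beta> = 0" unfolding sum_harmonic_basis_base[OF \<beta>] .
    then show "c b = 0" by (simp only: b comp_apply)
  qed (use fin in simp)
  moreover have "harm_hom j d \<subseteq> poly_space.span ?B"
  proof
    fix p assume "p \<in> harm_hom j d"
    then have "p = (\<Sum>\<gamma>\<in>base_idx d j. coeff_scale (p \<gamma>) (harmonic_basis d j \<gamma>))"
      by (rule harm_hom_eq_sum_harmonic_basis)
    also have "\<dots> \<in> poly_space.span ?B"
      by (intro poly_space.span_sum poly_space.span_scale poly_space.span_base) auto
    finally show "p \<in> poly_space.span ?B" .
  qed
  moreover have "?B \<subseteq> harm_hom j d" using harmonic_basis_in_harm_hom by blast
  ultimately have "card ?B = dimH j d"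
    unfolding dimH_def by (intro poly_space.basis_card_eq_dim)
  with inj show ?thesis by (simp add: card_image)
qed

lemma bij_betw_multi_idx_lists:
  assumes "1 \<le> d" "c \<le> j"
  shows "bij_betw (\<lambda>\<alpha>. map \<alpha> [1..<d]) {\<alpha> \<in> multi_idx d j. \<alpha> 0 = c}
    {xs. length xs = d - 1 \<and> sum_list xs = j - c}"
proof (rule bij_betw_byWitness[where f' = "\<lambda>xs i. if i = 0 then c else if i < d then xs ! (i - 1) else 0"])
  have sum_eq: "(\<Sum>i<d. \<alpha> i) = \<alpha> 0 + sum_list (map \<alpha> [1..<d])" for \<alpha> :: "nat \<Rightarrow> nat"
    using \<open>1 \<le> d\<close>
    by (simp add: atLeast0LessThan[symmetric] sum.atLeast_Suc_lessThan sum_set_upt_conv_sum_list_nat[symmetric])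
  show "\<forall>\<alpha>\<in>{\<alpha> \<in> multi_idx d j. \<alpha> 0 = c}.
      (\<lambda>i. if i = 0 then c else if i < d then map \<alpha> [1..<d] ! (i - 1) else 0) = \<alpha>"
    by (auto simp: multi_idx_def fun_eq_iff nth_map_upt)
  show "\<forall>xs\<in>{xs. length xs = d - 1 \<and> sum_list xs = j - c}.
      map (\<lambda>i. if i = 0 then c else if i < d then xs ! (i - 1) else 0) [1..<d] = xs"
    by (auto intro!: nth_equalityI simp: nth_map_upt)
  show "(\<lambda>\<alpha>. map \<alpha> [1..<d]) ` {\<alpha> \<in> multi_idx d j. \<alpha> 0 = c} \<subseteq> {xs. length xs = d - 1 \<and> sum_list xs = j - c}"
    using sum_eq by (auto simp: multi_idx_def)
  show "(\<lambda>xs i. if i = 0 then c else if i < d then xs ! (i - 1) else 0) `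
      {xs. length xs = d - 1 \<and> sum_list xs = j - c} \<subseteq> {\<alpha> \<in> multi_idx d j. \<alpha> 0 = c}"
  proof clarify
    fix xs :: "nat list" assume xs: "length xs = d - 1" "sum_list xs = j - c"
    let ?\<alpha> = "\<lambda>i. if i = 0 then c else if i < d then xs ! (i - 1) else 0"
    have "map ?\<alpha> [1..<d] = xs" using xs by (auto intro!: nth_equalityI simp: nth_map_upt)
    then show "?\<alpha> \<in> multi_idx d j \<and> ?\<alpha> 0 = c"
      using sum_eq[of ?\<alpha>] xs assms by (simp add: multi_idx_def)
  qed
qed

lemma card_multi_idx_first_eq:
  assumes "1 \<le> d" "c \<le> j"
  shows "card {\<alpha> \<in> multi_idx d j. \<alpha> 0 = c} = (j - c + d - 2) choose (j - c)"
  using bij_betw_same_card[OF bij_betw_multi_idx_lists[OF assms]] assms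
  by (simp add: card_length_sum_list)

lemma card_base_idx:
  assumes "2 \<le> d"
  shows "card (base_idx d j) = (j + d - 2 choose j) + (if j = 0 then 0 else j - 1 + d - 2 choose (j - 1))"
proof -
  let ?slice = "\<lambda>c. {\<alpha> \<in> multi_idx d j. \<alpha> 0 = c}"
  have "base_idx d j = ?slice 0 \<union> ?slice 1" by (auto simp: base_idx_def)
  then have "card (base_idx d j) = card (?slice 0) + card (?slice 1)"
    by (simp only:) (rule card_Un_disjoint, auto simp: finite_multi_idx)
  moreover have "card (?slice 0) = j + d - 2 choose j"
    using assms card_multi_idx_first_eq[of d 0 j] by simp
  moreover have "card (?slice 1) = (if j = 0 then 0 else j - 1 + d - 2 choose (j - 1))"
  proof (cases "j = 0")
    case True
    have "\<alpha> 0 = 0" if "\<alpha> \<in> multi_idx d j" for \<alpha>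
      using that True assms member_le_sum[of 0 "{..<d}" \<alpha>] by (simp add: multi_idx_def)
    then have "?slice 1 = {}" by (metis (mono_tags, lifting) empty_Collect_eq zero_neq_one)
    then show ?thesis using True by (metis card.empty)
  next
    case False
    then show ?thesis using assms card_multi_idx_first_eq[of d 1 j] by simp
  qed
  ultimately show ?thesis by simp
qed

text \<open>The case distinction on \<open>j = 0\<close> avoids the truncated subtraction \<open>j - 1\<close>.\<close>

definition lucas_coeff :: "nat \<Rightarrow> nat \<Rightarrow> nat" where
  "lucas_coeff l j =
    (if 2 * j \<le> l then (l - j choose j) + (if j = 0 then 0 else l - j - 1 choose (j - 1)) else 0)"

lemma dimH_eq_lucas_coeff:
  assumes "2 * j \<le> l"
  shows "dimH j (l + 2 - 2 * j) = lucas_coeff l j"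
proof -
  have "j + (l + 2 - 2 * j) - 2 = l - j" "j \<noteq> 0 \<Longrightarrow> j - 1 + (l + 2 - 2 * j) - 2 = l - j - 1"
    using assms by simp_all
  then show ?thesis
    using assms by (simp add: dimH_eq_card_base_idx card_base_idx lucas_coeff_def)
qed

lemma lucas_coeff_eq_0: "l < 2 * j \<Longrightarrow> lucas_coeff l j = 0"
  by (simp add: lucas_coeff_def)

lemma choose_Suc_eq: "(Suc m choose j) = (m choose j) + (if j = 0 then 0 else m choose (j - 1))"
  by (cases j) simp_all

lemma lucas_coeff_rec:
  assumes "1 \<le> l"
  shows "lucas_coeff (l + 2) (j + 1) = lucas_coeff (l + 1) (j + 1) + lucas_coeff l j"
proof -
  consider "2 * j < l" | "2 * j = l" | "l < 2 * j" by linarith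
  then show ?thesis
  proof cases
    case 1
    define m where "m = l - j - 1"
    with 1 have "l = m + j + 1" "j \<le> m" by simp_all
    then have "lucas_coeff (l + 2) (j + 1) = (Suc (Suc m) choose Suc j) + (Suc m choose j)"
      and "lucas_coeff (l + 1) (j + 1) = (Suc m choose Suc j) + (m choose j)"
      and "lucas_coeff l j = (Suc m choose j) + (if j = 0 then 0 else m choose (j - 1))"
      by (simp_all add: lucas_coeff_def)
    then show ?thesis by (simp only: binomial_Suc_Suc[of "Suc m"] choose_Suc_eq[of m j])
  next
    case 2
    with assms show ?thesis by (auto simp: lucas_coeff_def)
  qed (simp add: lucas_coeff_eq_0)
qed

definition lucas_poly :: "'a::comm_ring_1 \<Rightarrow> nat \<Rightarrow> 'a" where
  "lucas_poly X l = (\<Sum>j\<le>l div 2. (-1) ^ j * of_nat (lucas_coeff l j) * X ^ (l - 2 * j))"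

lemma lucas_poly_eq_sum_atMost:
  assumes "l div 2 \<le> N"
  shows "lucas_poly X l = (\<Sum>j\<le>N. (-1) ^ j * of_nat (lucas_coeff l j) * X ^ (l - 2 * j))"
proof -
  have "lucas_coeff l j = 0" if "l div 2 < j" for j
    using that by (intro lucas_coeff_eq_0) presburger
  then show ?thesis
    unfolding lucas_poly_def using assms by (intro sum.mono_neutral_left) (auto simp: not_le)
qed

lemma lucas_poly_rec:
  assumes "1 \<le> l"
  shows "lucas_poly X (l + 2) = X * lucas_poly X (l + 1) - lucas_poly X l"
proof -
  define t where "t l j = (-1) ^ j * of_nat (lucas_coeff l j) * X ^ (l - 2 * j)" for l j
  have t_rec: "t (l + 2) (Suc j) = X * t (l + 1) (Suc j) - t l j" for j
  proof (cases "2 * j < l")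
    case True
    then have "l - 2 * j = Suc (l + 1 - 2 * Suc j)" by simp
    then have "X ^ (l - 2 * j) = X * X ^ (l + 1 - 2 * Suc j)" by (simp only: power_Suc)
    then show ?thesis
      using lucas_coeff_rec[OF assms, of j] by (simp add: t_def algebra_simps)
  next
    case False
    then show ?thesis
      using lucas_coeff_rec[OF assms, of j] by (simp add: t_def lucas_coeff_eq_0 algebra_simps)
  qed
  have t_0: "t (l + 2) 0 = X * t (l + 1) 0"
    by (simp add: t_def lucas_coeff_def)
  have shift: "lucas_poly X (l' + 1) = t (l' + 1) 0 + (\<Sum>j\<le>l + 1. t (l' + 1) (Suc j))"
    if "l' \<le> l + 1" for l'
    using that by (simp add: lucas_poly_eq_sum_atMost[of _ "l + 2"] t_def sum.atMost_Suc_shift del: sum.atMost_Suc)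
  have "lucas_poly X (l + 2) = t (l + 2) 0 + (\<Sum>j\<le>l + 1. t (l + 2) (Suc j))"
    using shift[of "l + 1"] by simp
  also have "\<dots> = X * t (l + 1) 0 + (\<Sum>j\<le>l + 1. X * t (l + 1) (Suc j) - t l j)"
    by (simp only: t_0 t_rec)
  also have "\<dots> = X * (t (l + 1) 0 + (\<Sum>j\<le>l + 1. t (l + 1) (Suc j))) - (\<Sum>j\<le>l + 1. t l j)"
    by (simp add: sum_subtractf sum_distrib_left algebra_simps)
  also have "\<dots> = X * lucas_poly X (l + 1) - lucas_poly X l"
    using shift[of l] lucas_poly_eq_sum_atMost[of l "l + 1" X] by (simp add: t_def)
  finally show ?thesis .
qed

lemma power_add_inverse_eq_lucas_poly:
  fixes x :: "'a::field"
  assumes "x \<noteq> 0" "1 \<le> l"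
  shows "x ^ l + 1 / x ^ l = lucas_poly (x + 1 / x) l"
proof -
  let ?P = "\<lambda>l. x ^ l + 1 / x ^ l = lucas_poly (x + 1 / x) l"
  have "?P (n + 1) \<and> ?P (n + 2)" for n
  proof (induction n)
    case 0
    have "lucas_poly (x + 1 / x) 2 = (x + 1 / x) ^ 2 - 2"
      by (simp add: lucas_poly_def lucas_coeff_def numeral_2_eq_2)
    then show ?case
      using \<open>x \<noteq> 0\<close> by (simp add: lucas_poly_def lucas_coeff_def field_simps power2_eq_square)
  next
    case (Suc n)
    have "lucas_poly (x + 1 / x) (n + 3)
        = (x + 1 / x) * lucas_poly (x + 1 / x) (n + 2) - lucas_poly (x + 1 / x) (n + 1)"
      using lucas_poly_rec[of "n + 1" "x + 1 / x"] by (simp add: numeral_3_eq_3)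
    also have "\<dots> = (x + 1 / x) * (x ^ (n + 2) + 1 / x ^ (n + 2)) - (x ^ (n + 1) + 1 / x ^ (n + 1))"
      using Suc.IH by simp
    also have "\<dots> = x ^ (n + 3) + 1 / x ^ (n + 3)"
      using \<open>x \<noteq> 0\<close> by (simp add: field_simps numeral_3_eq_3)
    finally show ?case using Suc.IH by (simp add: numeral_3_eq_3)
  qed
  then show ?thesis
    using \<open>1 \<le> l\<close> by (metis add.commute le_add_diff_inverse)
qed

theorem lemma3p4:
  fixes x :: "'a::field" and l :: nat
  assumes "l \<ge> 1" and "x \<noteq> 0"
  shows "x ^ l + 1 / x ^ l =
    (\<Sum>j\<le>l div 2. (-1) ^ j * of_nat (dimH j (l + 2 - 2 * j)) * (x + 1 / x) ^ (l - 2 * j))"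
proof -
  have "dimH j (l + 2 - 2 * j) = lucas_coeff l j" if "j \<le> l div 2" for j
    using that by (intro dimH_eq_lucas_coeff) presburger
  then have "(\<Sum>j\<le>l div 2. (-1) ^ j * of_nat (dimH j (l + 2 - 2 * j)) * (x + 1 / x) ^ (l - 2 * j))
      = lucas_poly (x + 1 / x) l"
    unfolding lucas_poly_def by (intro sum.cong refl) simp
  then show ?thesis using assms power_add_inverse_eq_lucas_poly by metis
qed

end
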